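(* Let $n\ge 5$ be odd. Then $E_n=\{x+2^{n-2}: x\in E_{n-1}\}\cup\{x+2^{n-1}: x\in E_{n-1}\}$; that is, listing $E_n$ in increasing order, one obtains the elements of $E_{n-1}$ each increased by $2^{n-2}$ (in increasing order), immediately followed by the elements of $E_{n-1}$ each increased by $2^{n-1}$ (in increasing order).
   Context: Let $D$ (OEIS A036991) be the set of nonnegative integers $m$ such that, reading the binary expansion of $m$ from the least significant bit to the most significant bit, at every point the number of 1's read so far is at least the number of 0's read so far. For $n\ge1$ let $M_n=2^n-1$ and let the $n$-level be $E_n=D\cap(M_{n-1},M_n]$, i.e. the elements of $D$ whose binary expansion has exactly $n$ digits. *)

theory Defs
  imports Main
begin

fun bin_digits :: "nat \<Rightarrow> nat list" where
  "bin_digits m = (if m = 0 then [] else (m mod 2) # bin_digits (m div 2))"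

text \<open>OEIS A036991: reading from the LSB, every prefix has at least as many 1s as 0s.\<close>
definition inD :: "nat \<Rightarrow> bool" where
  "inD m \<longleftrightarrow> (\<forall>k \<le> length (bin_digits m).
      count_list (take k (bin_digits m)) 0 \<le> count_list (take k (bin_digits m)) 1)"

definition Dset :: "nat set" where
  "Dset = {m. inD m}"

definition Mn :: "nat \<Rightarrow> nat" where
  "Mn n = 2 ^ n - 1"

definition E :: "nat \<Rightarrow> nat set" where
  "E n = Dset \<inter> {Mn (n - 1)<..Mn n}"

end

theory Submission
  imports Defs
begin

text \<open>Split the digit word of an element of \<open>E (L+1)\<close> or \<open>E (L+2)\<close> into its lowest \<open>L\<close>
  digits and the rest. For odd \<open>L\<close>, a word of length \<open>L\<close> satisfying the prefix condition has
  strictly more 1s than 0s, so any digit may follow it, and the leading 1 never hurts. Hence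
  membership in both levels depends only on the residue modulo \<open>2^L\<close>, and \<open>[2^(L+1), 2^(L+2))\<close> is
  the union of the two translates of \<open>[2^L, 2^(L+1))\<close> by \<open>2^L\<close> and \<open>2^(L+1)\<close>.\<close>

declare bin_digits.simps[simp del]

definition ones_dominate :: "nat list \<Rightarrow> bool" where
  "ones_dominate ds \<longleftrightarrow>
     (\<forall>k \<le> length ds. count_list (take k ds) 0 \<le> count_list (take k ds) 1)"

definition low_digits :: "nat \<Rightarrow> nat \<Rightarrow> nat list" where
  "low_digits L m = map (\<lambda>i. m div 2 ^ i mod 2) [0..<L]"

lemma inD_iff_ones_dominate: "inD m \<longleftrightarrow> ones_dominate (bin_digits m)"
  by (simp add: inD_def ones_dominate_def)

lemma ones_dominate_snoc:
  "ones_dominate (xs @ [a]) \<longleftrightarrow>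
     ones_dominate xs \<and> count_list (xs @ [a]) 0 \<le> count_list (xs @ [a]) 1"
  unfolding ones_dominate_def by (auto simp: le_Suc_eq)

lemma ones_dominate_count_le:
  "ones_dominate xs \<Longrightarrow> count_list xs 0 \<le> count_list xs 1"
  unfolding ones_dominate_def by (metis order_refl take_all)

lemma ones_dominate_snoc_one: "ones_dominate (xs @ [1]) \<longleftrightarrow> ones_dominate xs"
  using ones_dominate_count_le by (fastforce simp: ones_dominate_snoc)

lemma count_list_zero_add_one:
  "set xs \<subseteq> {0, 1} \<Longrightarrow> count_list xs (0::nat) + count_list xs 1 = length xs"
  by (induction xs) auto

lemma ones_dominate_snoc_odd_length:
  assumes "odd (length xs)" and "set xs \<subseteq> {0, 1}"
  shows "ones_dominate (xs @ [b]) \<longleftrightarrow> ones_dominate xs"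
proof -
  have "count_list xs 0 < count_list xs 1" if "ones_dominate xs"
    using ones_dominate_count_le[OF that] count_list_zero_add_one[OF assms(2)] assms(1)
    by (metis antisym_conv2 even_add)
  then show ?thesis by (auto simp: ones_dominate_snoc)
qed

lemma low_digits_length [simp]: "length (low_digits L m) = L"
  by (simp add: low_digits_def)

lemma low_digits_binary: "set (low_digits L m) \<subseteq> {0, 1}"
  by (auto simp: low_digits_def)

lemma low_digits_Suc: "low_digits (Suc L) m = low_digits L m @ [m div 2 ^ L mod 2]"
  by (simp add: low_digits_def)

lemma low_digits_Suc_Cons: "low_digits (Suc L) m = m mod 2 # low_digits L (m div 2)"
  unfolding low_digits_def
  by (simp add: upt_conv_Cons map_Suc_upt[symmetric] div_mult2_eq del: upt_Suc)

lemma low_digits_mod: "low_digits L (m mod 2 ^ L) = low_digits L m"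
  unfolding low_digits_def
  by (intro map_cong refl)
     (metis atLeastLessThan_iff set_upt bit_iff_odd bit_take_bit_iff take_bit_eq_mod
       odd_iff_mod_2_eq_one mod2_eq_if)

lemma bin_digits_eq_low_digits:
  "2 ^ k \<le> m \<Longrightarrow> m < 2 ^ Suc k \<Longrightarrow> bin_digits m = low_digits k m @ [1]"
proof (induction k arbitrary: m)
  case 0
  then have "m = 1" by simp
  then show ?case by (simp add: low_digits_def bin_digits.simps)
next
  case (Suc k)
  then have "bin_digits (m div 2) = low_digits k (m div 2) @ [1]"
    by (intro Suc.IH) auto
  moreover have "m \<noteq> 0" using Suc.prems(1) by (metis le_0_eq power_not_zero zero_neq_numeral)
  ultimately show ?case by (subst bin_digits.simps) (simp add: low_digits_Suc_Cons)
qed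

lemma inD_iff_low_digits:
  assumes "odd L" and "2 ^ L \<le> m" and "m < 2 ^ Suc (Suc L)"
  shows "inD m \<longleftrightarrow> ones_dominate (low_digits L m)"
proof (cases "m < 2 ^ Suc L")
  case True
  then have "bin_digits m = low_digits L m @ [1]"
    using assms bin_digits_eq_low_digits by simp
  then show ?thesis by (simp only: inD_iff_ones_dominate ones_dominate_snoc_one)
next
  case False
  then have "bin_digits m = low_digits L m @ [m div 2 ^ L mod 2] @ [1]"
    using assms bin_digits_eq_low_digits[of "Suc L" m] by (simp add: low_digits_Suc)
  then show ?thesis
    using assms(1) low_digits_binary ones_dominate_snoc_odd_length
    by (simp only: inD_iff_ones_dominate ones_dominate_snoc_one flip: append_assoc) simp
qed

lemma mem_E_iff: "m \<in> E n \<longleftrightarrow> 2 ^ (n - 1) \<le> m \<and> m < 2 ^ n \<and> inD m"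
proof -
  have "Mn k < m \<longleftrightarrow> 2 ^ k \<le> m" "m \<le> Mn k \<longleftrightarrow> m < 2 ^ k" for k
    using one_le_power[of "2::nat" k] unfolding Mn_def by linarith+
  then show ?thesis unfolding E_def Dset_def by auto
qed

lemma translates_cover_next_block:
  fixes p :: nat
  shows "{m. 2 * p \<le> m \<and> m < 4 * p \<and> Q (m mod p)} =
    (\<lambda>x. x + p) ` {x. p \<le> x \<and> x < 2 * p \<and> Q (x mod p)} \<union>
    (\<lambda>x. x + 2 * p) ` {x. p \<le> x \<and> x < 2 * p \<and> Q (x mod p)}"
    (is "?block = ?low \<union> ?high")
proof
  show "?block \<subseteq> ?low \<union> ?high"
  proof
    fix m assume m: "m \<in> ?block"
    show "m \<in> ?low \<union> ?high"
    proof (cases "m < 3 * p")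
      case True
      then have "m = (m - p) + p" "(m - p) mod p = m mod p"
        using m by (auto simp: le_mod_geq)
      then show ?thesis using True m by (auto intro!: image_eqI[of m _ "m - p"])
    next
      case False
      then have m_eq: "m = (m - 2 * p) + 2 * p" using m by simp
      then have "(m - 2 * p) mod p = m mod p" by (metis mod_mult_self1)
      then show ?thesis using False m m_eq by (auto intro!: image_eqI[of m _ "m - 2 * p"])
    qed
  qed
qed auto

lemma E_Suc_Suc_odd:
  assumes "odd L"
  shows "E (Suc (Suc L)) = (\<lambda>x. x + 2 ^ L) ` E (Suc L) \<union> (\<lambda>x. x + 2 * 2 ^ L) ` E (Suc L)"
proof -
  define Q where "Q r \<longleftrightarrow> ones_dominate (low_digits L r)" for r
  have dominate_mod: "ones_dominate (low_digits L m) \<longleftrightarrow> Q (m mod 2 ^ L)" for m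
    by (simp add: Q_def low_digits_mod)
  have "E (Suc (Suc L)) = {m. 2 * 2 ^ L \<le> m \<and> m < 4 * 2 ^ L \<and> Q (m mod 2 ^ L)}"
    using assms by (auto simp: mem_E_iff inD_iff_low_digits dominate_mod)
  moreover have "E (Suc L) = {x. 2 ^ L \<le> x \<and> x < 2 * 2 ^ L \<and> Q (x mod 2 ^ L)}"
    using assms by (auto simp: mem_E_iff inD_iff_low_digits dominate_mod)
  ultimately show ?thesis by (simp only: translates_cover_next_block)
qed

theorem proposition7:
  fixes n :: nat
  assumes "n \<ge> 5" and "odd n"
  shows "E n = (\<lambda>x. x + 2 ^ (n - 2)) ` E (n - 1) \<union> (\<lambda>x. x + 2 ^ (n - 1)) ` E (n - 1)
    \<and> (\<forall>x \<in> E (n - 1). \<forall>y \<in> E (n - 1). x + 2 ^ (n - 2) < y + 2 ^ (n - 1))"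
proof -
  define L where "L = n - 2"
  have n: "n = Suc (Suc L)" and "odd L"
    using assms by (auto simp: L_def)
  have "x + 2 ^ L < y + 2 * 2 ^ L" if "x \<in> E (Suc L)" "y \<in> E (Suc L)" for x y
    using that by (simp add: mem_E_iff)
  then show ?thesis using E_Suc_Suc_odd[OF \<open>odd L\<close>] by (simp add: n)
qed

end
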